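(* Let $\lambda_1,\ldots,\lambda_k$ be integers, let $n_1,\ldots,n_k$ be positive integers and let $a_1,\ldots,a_k$ be integers with $0\leqslant a_s<n_s$ for each $s$. Let $p$ be a prime with $p>|S(n_1,\ldots,n_k)|$ and let $\zeta_p$ be any primitive $p$th root of unity. Then $$\sum_{\substack{1\leqslant s\leqslant k\\ x\equiv a_s \pmod{n_s}}}\lambda_s=0\quad\text{for all }x\in\mathbb Z$$ if and only if $$\sum_{s=1}^k\lambda_s\frac{\zeta_p^{a_s}}{1-\zeta_p^{n_s}}=0.$$
   Context: For positive integers $n_1,\ldots,n_k$, $S(n_1,\ldots,n_k)=\{r/n_s: r=0,\ldots,n_s-1;\ s=1,\ldots,k\}$, a set of rational numbers, and $|S(\cdot)|$ denotes its cardinality. *)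

theory Defs
  imports Complex_Main "HOL-Number_Theory.Cong"
begin

definition S_set :: "nat \<Rightarrow> (nat \<Rightarrow> nat) \<Rightarrow> rat set" where
  "S_set k n = {of_nat r / of_nat (n s) | r s. s \<in> {1..k} \<and> r < n s}"

definition primitive_root_of_unity :: "nat \<Rightarrow> complex \<Rightarrow> bool" where
  "primitive_root_of_unity m z \<longleftrightarrow> 0 < m \<and> z ^ m = 1 \<and> (\<forall>j\<in>{1..<m}. z ^ j \<noteq> 1)"

end

(*
  Write c(x) for the sum on the left and F(z) for the rational function on the right.
  Summing geometric series gives F(z) (1 - z^N) = P(z) := sum_{x<N} c(x) z^x with N = n_1 ... n_k,
  and c is N-periodic, so c = 0 iff P = 0. As p > |S| >= n_s, p does not divide N and zeta^N is
  not 1, which gives one direction. Conversely, P has integer coefficients and the p-th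
  cyclotomic polynomial is irreducible (Eisenstein), so P(zeta) = 0 forces P(zeta^t) = 0 for all
  0 < t < p, i.e. F vanishes at p - 1 >= |S| points. But F has at most |S| simple poles, the
  points exp(2 pi i r) for r in S, and over their common denominator its numerator has degree
  less than |S|. Hence F vanishes identically, and then so does P.
*)
theory Submission
  imports Defs "HOL-Computational_Algebra.Polynomial_Factorial"
begin

lemma map_poly_of_int_add:
  "map_poly (of_int :: int \<Rightarrow> 'a::comm_ring_1) (p + q) = map_poly of_int p + map_poly of_int q"
  by (rule poly_eqI) (simp add: coeff_map_poly)

lemma map_poly_of_int_mult:
  "map_poly (of_int :: int \<Rightarrow> 'a::comm_ring_1) (p * q) = map_poly of_int p * map_poly of_int q"
  by (rule poly_eqI) (simp add: coeff_map_poly coeff_mult)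

lemma map_poly_of_int_sum:
  "map_poly (of_int :: int \<Rightarrow> 'a::comm_ring_1) (\<Sum>x\<in>A. f x) = (\<Sum>x\<in>A. map_poly of_int (f x))"
  by (rule poly_eqI) (simp add: coeff_map_poly coeff_sum)

lemma eisenstein_criterion:
  fixes f g :: "'a::idom poly"
  assumes q: "prime_elem q"
    and low: "\<forall>i<degree (f * g). q dvd coeff (f * g) i"
    and lead: "\<not> q dvd lead_coeff (f * g)"
    and const: "\<not> q\<^sup>2 dvd coeff (f * g) 0"
  shows "degree f = 0 \<or> degree g = 0"
proof (rule ccontr)
  assume "\<not> (degree f = 0 \<or> degree g = 0)"
  then have pos: "0 < degree f" "0 < degree g"
    by auto
  have key: False if "q dvd coeff u 0" "\<not> q dvd coeff v 0" "u * v = f * g" "0 < degree v" for u v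
  proof -
    have "\<not> q dvd lead_coeff u"
      using lead \<open>u * v = f * g\<close> by (metis dvd_mult2 lead_coeff_mult)
    then have ex: "\<exists>i. \<not> q dvd coeff u i"
      by blast
    define i where "i = (LEAST i. \<not> q dvd coeff u i)"
    have ui: "\<not> q dvd coeff u i" and below: "\<And>j. j < i \<Longrightarrow> q dvd coeff u j"
      unfolding i_def using LeastI_ex[OF ex] not_less_Least by blast+
    have "i \<le> degree u"
      using ui by (metis dvd_0_right le_degree)
    have "0 < i"
      using ui that(1) by (cases i) auto
    have "coeff (u * v) i = (\<Sum>j<i. coeff u j * coeff v (i - j)) + coeff u i * coeff v 0"
      by (simp add: coeff_mult lessThan_Suc_atMost[symmetric])
    moreover have "q dvd (\<Sum>j<i. coeff u j * coeff v (i - j))"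
      by (intro dvd_sum) (simp add: below)
    moreover have "i < degree (u * v)"
      using \<open>i \<le> degree u\<close> \<open>0 < degree v\<close> ui by (subst degree_mult_eq) auto
    ultimately have "q dvd coeff u i * coeff v 0"
      using low that(3) by (metis dvd_add_right_iff)
    then show False
      using q ui that(2) by (simp add: prime_elem_dvd_mult_iff)
  qed
  have "q dvd coeff f 0 * coeff g 0"
    using low pos by (metis add_gr_0 coeff_mult_0 degree_mult_eq degree_0 less_irrefl)
  moreover have "\<not> (q dvd coeff f 0 \<and> q dvd coeff g 0)"
    using const by (auto simp: coeff_mult_0 power2_eq_square intro: mult_dvd_mono)
  ultimately consider "q dvd coeff f 0" "\<not> q dvd coeff g 0" | "q dvd coeff g 0" "\<not> q dvd coeff f 0"
    using q by (auto simp: prime_elem_dvd_mult_iff)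
  then show False
    by cases (use key[of f g] key[of g f] pos in \<open>simp_all add: mult.commute\<close>)
qed

definition geometric_poly :: "nat \<Rightarrow> int poly" where
  "geometric_poly n = (\<Sum>j<n. monom 1 j)"

lemma coeff_geometric_poly: "coeff (geometric_poly n) i = (if i < n then 1 else 0)"
  by (simp add: geometric_poly_def coeff_sum coeff_monom)

lemma degree_geometric_poly: "degree (geometric_poly n) = n - 1"
  by (cases n) (auto intro!: antisym degree_le le_degree simp: coeff_geometric_poly)

lemma lead_coeff_geometric_poly: "0 < n \<Longrightarrow> lead_coeff (geometric_poly n) = 1"
  by (simp add: degree_geometric_poly coeff_geometric_poly)

lemma poly_geometric_poly:
  "poly (map_poly of_int (geometric_poly n)) (z :: 'a::comm_ring_1) = (\<Sum>j<n. z ^ j)"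
  by (simp add: geometric_poly_def map_poly_of_int_sum map_poly_monom poly_sum poly_monom)

lemma coeff_linear_one_one_power: "coeff ([:1, 1:] ^ j) i = of_nat (j choose i)"
  by (cases "i \<le> j") (simp_all add: coeff_linear_poly_power coeff_eq_0 degree_linear_power binomial_eq_0)

lemma coeff_geometric_poly_shift:
  "coeff (pcompose (geometric_poly n) [:1, 1:]) i = int (n choose Suc i)"
proof -
  have "pcompose (geometric_poly n) [:1, 1:] = (\<Sum>j<n. [:1, 1:] ^ j)"
    by (rule poly_eq_poly_eq_iff[THEN iffD1])
      (simp add: fun_eq_iff poly_pcompose geometric_poly_def poly_sum poly_monom)
  then show ?thesis
    by (cases n) (simp_all add: coeff_sum coeff_linear_one_one_power lessThan_Suc_atMost
        sum_choose_upper flip: of_nat_sum)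
qed

lemma irreducible_geometric_poly:
  assumes p: "prime p"
  shows "irreducible (geometric_poly p)"
proof (rule irreducibleI)
  have "1 < p"
    using p by (rule prime_gt_1_nat)
  then have lead: "lead_coeff (geometric_poly p) = 1"
    by (simp add: lead_coeff_geometric_poly)
  then show "geometric_poly p \<noteq> 0"
    by auto
  show "\<not> is_unit (geometric_poly p)"
    using \<open>1 < p\<close> degree_geometric_poly[of p] by (auto simp: is_unit_poly_iff)
  fix f g assume fg: "geometric_poly p = f * g"
  let ?shift = "\<lambda>h. pcompose h [:1, 1 :: int:]"
  have "degree (?shift f) = 0 \<or> degree (?shift g) = 0"
  proof (rule eisenstein_criterion)
    have shift: "?shift f * ?shift g = ?shift (geometric_poly p)"
      by (simp add: fg pcompose_mult)
    have deg: "degree (?shift (geometric_poly p)) = p - 1"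
      by (simp add: degree_pcompose degree_geometric_poly)
    show "prime_elem (int p)"
      using p by simp
    show "\<forall>i<degree (?shift f * ?shift g). int p dvd coeff (?shift f * ?shift g) i"
      unfolding shift deg coeff_geometric_poly_shift using p by (auto intro: dvd_choose_prime)
    show "\<not> int p dvd lead_coeff (?shift f * ?shift g)"
      unfolding shift deg coeff_geometric_poly_shift using \<open>1 < p\<close> by simp
    show "\<not> (int p)\<^sup>2 dvd coeff (?shift f * ?shift g) 0"
      unfolding shift coeff_geometric_poly_shift using \<open>1 < p\<close> by (simp add: power2_eq_square)
  qed
  then have "degree f = 0 \<or> degree g = 0"
    by (simp add: degree_pcompose)
  moreover have "lead_coeff f * lead_coeff g = 1"
    using fg lead by (simp add: lead_coeff_mult)
  moreover have "is_unit h" if "degree h = 0" "lead_coeff h dvd 1" for h :: "int poly"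
    using that by (metis degree_0_id is_unit_poly_iff)
  ultimately show "is_unit f \<or> is_unit g"
    by (metis dvd_triv_left dvd_triv_right)
qed

lemma geometric_poly_root:
  fixes z :: "'a::idom"
  assumes "z ^ n = 1" "z \<noteq> 1"
  shows "poly (map_poly of_int (geometric_poly n)) z = 0"
  using power_diff_1_eq[of z n] assms by (simp add: poly_geometric_poly)

lemma geometric_poly_dvd_factor:
  assumes p: "prime p" and eq: "smult c (geometric_poly p) = Q * q"
    and "c \<noteq> 0" "0 < degree Q"
  shows "geometric_poly p dvd Q"
proof -
  let ?\<Phi> = "geometric_poly p"
  have "prime_elem ?\<Phi>"
    by (rule irreducible_imp_prime_poly[OF irreducible_geometric_poly[OF p]])
  moreover have "?\<Phi> dvd Q * q"
    unfolding eq[symmetric] by (rule dvd_smult) (rule dvd_refl)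
  ultimately consider "?\<Phi> dvd Q" | "?\<Phi> dvd q"
    by (auto simp: prime_elem_dvd_mult_iff)
  then show ?thesis
  proof cases
    case 2
    then obtain q' where "q = ?\<Phi> * q'" ..
    then have "?\<Phi> * [:c:] = ?\<Phi> * (Q * q')"
      using eq by (simp add: ac_simps)
    moreover have "?\<Phi> \<noteq> 0"
      using irreducible_geometric_poly[OF p] by auto
    ultimately have const: "[:c:] = Q * q'"
      using mult_left_cancel by blast
    then have "Q \<noteq> 0" "q' \<noteq> 0"
      using \<open>c \<noteq> 0\<close> by auto
    then have "degree Q + degree q' = degree [:c:]"
      using const by (simp add: degree_mult_eq)
    then show ?thesis
      using \<open>0 < degree Q\<close> by simp
  qed
qed

(* The minimal-polynomial argument, as a strong induction on the degree of Q. *)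
lemma degree_ge_if_root_of_unity:
  fixes z :: "'a::{idom,ring_char_0}" and Q :: "int poly"
  assumes p: "prime p" and z: "z ^ p = 1" "z \<noteq> 1"
  shows "Q \<noteq> 0 \<Longrightarrow> poly (map_poly of_int Q) z = 0 \<Longrightarrow> p - 1 \<le> degree Q"
proof (induction "degree Q" arbitrary: Q rule: less_induct)
  case less
  let ?\<Phi> = "geometric_poly p"
  obtain q r where qr: "pseudo_divmod ?\<Phi> Q = (q, r)"
    by (metis surj_pair)
  define c where "c = lead_coeff Q ^ (Suc (degree ?\<Phi>) - degree Q)"
  have "c \<noteq> 0"
    using less.prems by (simp add: c_def)
  have div: "smult c ?\<Phi> = Q * q + r" and r: "r = 0 \<or> degree r < degree Q"
    using pseudo_divmod[OF less.prems(1) qr] by (simp_all add: c_def)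
  have "poly (map_poly of_int r) z = 0"
    using arg_cong[OF div, of "\<lambda>f. poly (map_poly of_int f) z"] less.prems(2) geometric_poly_root[OF z]
    by (simp add: map_poly_of_int_add map_poly_of_int_mult map_poly_smult)
  show ?case
  proof (cases "r = 0")
    case False
    then have "p - 1 \<le> degree r"
      using r \<open>poly (map_poly of_int r) z = 0\<close> by (intro less.hyps) auto
    then show ?thesis
      using False r by linarith
  next
    case True
    show ?thesis
    proof (cases "degree Q = 0")
      case True
      then obtain d where "Q = [:d:]"
        by (metis degree_0_id)
      then show ?thesis
        using less.prems by (simp add: map_poly_pCons)
    next
      case False
      have "smult c ?\<Phi> = Q * q"
        using div \<open>r = 0\<close> by simp
      then have "?\<Phi> dvd Q"
        using geometric_poly_dvd_factor[OF p _ \<open>c \<noteq> 0\<close>] False by blast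
      then show ?thesis
        using dvd_imp_degree_le less.prems(1) degree_geometric_poly by metis
    qed
  qed
qed

lemma geometric_poly_dvd_if_root_of_unity:
  fixes z :: "'a::{idom,ring_char_0}" and Q :: "int poly"
  assumes p: "prime p" and z: "z ^ p = 1" "z \<noteq> 1" and Q: "poly (map_poly of_int Q) z = 0"
  shows "geometric_poly p dvd Q"
proof -
  let ?\<Phi> = "geometric_poly p"
  have lead: "lead_coeff ?\<Phi> = 1"
    using p by (simp add: lead_coeff_geometric_poly prime_gt_0_nat)
  obtain q r where qr: "pseudo_divmod Q ?\<Phi> = (q, r)"
    by (metis surj_pair)
  have div: "Q = ?\<Phi> * q + r" and r: "r = 0 \<or> degree r < p - 1"
    using pseudo_divmod[OF _ qr] lead by (force simp: degree_geometric_poly)+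
  have "poly (map_poly of_int r) z = 0"
    using arg_cong[OF div, of "\<lambda>f. poly (map_poly of_int f) z"] Q geometric_poly_root[OF z]
    by (simp add: map_poly_of_int_add map_poly_of_int_mult)
  then have "r = 0"
    using r degree_ge_if_root_of_unity[OF p z, of r] by linarith
  then show ?thesis
    using div by simp
qed

lemma int_poly_root_of_unity_conjugate:
  fixes z w :: "'a::{idom,ring_char_0}" and Q :: "int poly"
  assumes "prime p" "z ^ p = 1" "z \<noteq> 1" "poly (map_poly of_int Q) z = 0"
    and "w ^ p = 1" "w \<noteq> 1"
  shows "poly (map_poly of_int Q) w = 0"
proof -
  obtain q where "Q = geometric_poly p * q"
    using geometric_poly_dvd_if_root_of_unity[OF assms(1-4)] ..
  then show ?thesis
    using geometric_poly_root[OF assms(5,6)] by (simp add: map_poly_of_int_mult)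
qed

lemma prod_minus_roots_of_unity:
  fixes z :: complex
  assumes "0 < n"
  shows "(\<Prod>w | w ^ n = 1. z - w) = z ^ n - 1"
proof -
  let ?U = "{w :: complex. w ^ n = 1}"
  have fin: "finite ?U" and card: "card ?U = n"
    using assms by (simp_all add: finite_roots_unity card_roots_unity_eq)
  have deg: "degree (\<Prod>w\<in>?U. [:- w, 1:]) = n"
    using card by (simp add: degree_prod_eq_sum_degree)
  have "(\<Prod>w\<in>?U. [:- w, 1:]) = monom 1 n - 1"
  proof (rule poly_eqI_degree_lead_coeff[where A = ?U])
    have "coeff (\<Prod>w\<in>?U. [:- w, 1:]) n = 1"
      using lead_coeff_prod[of "\<lambda>w. [:- w, 1:]" ?U] deg by simp
    then show "coeff (\<Prod>w\<in>?U. [:- w, 1:]) n = coeff (monom 1 n - 1) n"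
      using assms by (simp add: coeff_monom)
    show "degree (monom 1 n - 1 :: complex poly) \<le> n"
      by (rule degree_diff_le) (simp_all add: degree_monom_le)
  qed (use card deg in \<open>simp_all add: poly_prod poly_monom fin\<close>)
  from arg_cong[OF this, of "\<lambda>q. poly q z"] show ?thesis
    by (simp add: poly_prod poly_monom)
qed

lemma residue_class_geometric_sum:
  fixes z :: "'a::field"
  assumes "a < n" "z ^ n \<noteq> 1"
  shows "z ^ a / (1 - z ^ n) * (1 - z ^ (n * M)) = (\<Sum>x<n * M. if x mod n = a then z ^ x else 0)"
proof -
  have geometric: "(1 - z ^ (n * M)) / (1 - z ^ n) = (\<Sum>m<M. (z ^ n) ^ m)"
    using one_diff_power_eq[of "z ^ n" M] assms(2) by (simp add: power_mult)
  have "z ^ a / (1 - z ^ n) * (1 - z ^ (n * M)) = z ^ a * ((1 - z ^ (n * M)) / (1 - z ^ n))"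
    by (simp only: times_divide_eq_left times_divide_eq_right)
  also have "\<dots> = (\<Sum>m<M. z ^ (a + n * m))"
    unfolding geometric sum_distrib_left by (intro sum.cong) (simp_all add: power_add power_mult)
  also have "\<dots> = (\<Sum>x | x < n * M \<and> x mod n = a. z ^ x)"
  proof (rule sum.reindex_bij_witness[where i = "\<lambda>x. x div n" and j = "\<lambda>m. a + n * m"])
    fix m assume m: "m \<in> {..<M}"
    have "a + n * m < n * Suc m"
      using assms(1) by simp
    also have "\<dots> \<le> n * M"
      using m by (intro mult_le_mono2) simp
    finally have "a + n * m < n * M" .
    moreover have "(a + n * m) mod n = a"
      using assms(1) by simp
    ultimately show "a + n * m \<in> {x. x < n * M \<and> x mod n = a}"
      by simp
    show "(a + n * m) div n = m"
      using assms(1) by simp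
  next
    fix x assume x: "x \<in> {x. x < n * M \<and> x mod n = a}"
    then show "a + n * (x div n) = x"
      using mod_mult_div_eq[of x n] by simp
    have "x < M * n"
      using x by (simp add: mult.commute)
    then show "x div n \<in> {..<M}"
      by (simp add: less_mult_imp_div_less)
  qed simp
  also have "\<dots> = (\<Sum>x<n * M. if x mod n = a then z ^ x else 0)"
    by (simp add: sum.inter_filter[symmetric] lessThan_def conj_commute)
  finally show ?thesis .
qed

lemma primitive_root_of_unity_power_eq_1_iff:
  assumes "primitive_root_of_unity p \<zeta>"
  shows "\<zeta> ^ m = 1 \<longleftrightarrow> p dvd m"
proof -
  have "0 < p" "\<zeta> ^ p = 1" and prim: "\<forall>j\<in>{1..<p}. \<zeta> ^ j \<noteq> 1"
    using assms by (auto simp: primitive_root_of_unity_def)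
  have "\<zeta> ^ m = \<zeta> ^ (p * (m div p) + m mod p)"
    by simp
  also have "\<dots> = \<zeta> ^ (m mod p)"
    by (simp only: power_add power_mult \<open>\<zeta> ^ p = 1\<close> power_one mult_1)
  finally have "\<zeta> ^ m = 1 \<longleftrightarrow> \<zeta> ^ (m mod p) = 1"
    by simp
  also have "\<dots> \<longleftrightarrow> m mod p = 0"
    using prim \<open>0 < p\<close> by (cases "m mod p = 0") auto
  finally show ?thesis
    by (simp add: dvd_eq_mod_eq_0)
qed

lemma inj_on_primitive_root_powers:
  assumes "primitive_root_of_unity p \<zeta>"
  shows "inj_on (\<lambda>t. \<zeta> ^ t) {..<p}"
proof -
  have "\<zeta> \<noteq> 0"
    using assms by (auto simp: primitive_root_of_unity_def power_0_left)
  have "t = u" if "t \<le> u" "u < p" "\<zeta> ^ t = \<zeta> ^ u" for t u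
  proof -
    have "\<zeta> ^ t * \<zeta> ^ (u - t) = \<zeta> ^ u"
      using that(1) by (simp flip: power_add)
    also have "\<dots> = \<zeta> ^ t * 1"
      using that(3) by simp
    finally have "\<zeta> ^ t * \<zeta> ^ (u - t) = \<zeta> ^ t * 1" .
    then have "p dvd u - t"
      using \<open>\<zeta> \<noteq> 0\<close> primitive_root_of_unity_power_eq_1_iff[OF assms] by simp
    then show "t = u"
      using that by (auto dest: dvd_imp_le)
  qed
  then show ?thesis
    by (intro inj_onI) (metis lessThan_iff nat_le_linear)
qed

(* weight, gen_fun, weight_poly and period are c, F, P and N above, with the residues a_s taken
   as natural numbers. *)
locale residue_classes =
  fixes K :: "nat set" and lam :: "nat \<Rightarrow> int" and n :: "nat \<Rightarrow> nat" and a :: "nat \<Rightarrow> nat"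
  assumes finite_K: "finite K"
    and n_pos: "s \<in> K \<Longrightarrow> 0 < n s"
    and a_less: "s \<in> K \<Longrightarrow> a s < n s"
begin

definition weight :: "int \<Rightarrow> int" where
  "weight x = (\<Sum>s\<in>{s\<in>K. [x = int (a s)] (mod int (n s))}. lam s)"

definition gen_fun :: "complex \<Rightarrow> complex" where
  "gen_fun z = (\<Sum>s\<in>K. of_int (lam s) * z ^ a s / (1 - z ^ n s))"

definition period :: nat where
  "period = (\<Prod>s\<in>K. n s)"

definition weight_poly :: "int poly" where
  "weight_poly = (\<Sum>x<period. monom (weight (int x)) x)"

definition poles :: "complex set" where
  "poles = {w. \<exists>s\<in>K. w ^ n s = 1}"

lemma period_pos: "0 < period"
  using finite_K n_pos by (simp add: period_def prod_pos)

lemma n_dvd_period: "s \<in> K \<Longrightarrow> n s dvd period"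
  using finite_K by (simp add: period_def dvd_prodI)

lemma weight_mod_period: "weight (x mod int period) = weight x"
proof -
  have "[x mod int period = y] (mod int (n s)) \<longleftrightarrow> [x = y] (mod int (n s))" if "s \<in> K" for s y
    using n_dvd_period[OF that] by (simp add: cong_def mod_mod_cancel)
  then show ?thesis
    unfolding weight_def by (intro sum.cong) auto
qed

lemma weight_of_nat: "weight (int x) = (\<Sum>s\<in>K. if x mod n s = a s then lam s else 0)"
proof -
  have "[int x = int (a s)] (mod int (n s)) \<longleftrightarrow> x mod n s = a s" if "s \<in> K" for s
    using a_less[OF that] by (simp only: cong_int_iff) (simp add: cong_def)
  then show ?thesis
    unfolding weight_def using finite_K by (simp add: sum.inter_filter cong: if_cong)
qed

lemma coeff_weight_poly: "coeff weight_poly x = (if x < period then weight (int x) else 0)"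
  by (simp add: weight_poly_def coeff_sum coeff_monom)

lemma weight_poly_eq_0_iff: "weight_poly = 0 \<longleftrightarrow> (\<forall>x. weight x = 0)"
proof
  assume "weight_poly = 0"
  show "\<forall>x. weight x = 0"
  proof
    fix x
    have "x mod int period = int (nat (x mod int period))" and "nat (x mod int period) < period"
      using period_pos by (simp_all add: nat_less_iff)
    then have "weight (x mod int period) = coeff weight_poly (nat (x mod int period))"
      by (simp add: coeff_weight_poly)
    then show "weight x = 0"
      using \<open>weight_poly = 0\<close> by (simp add: weight_mod_period)
  qed
qed (simp add: weight_poly_def)

lemma poly_weight_poly:
  "poly (map_poly of_int weight_poly) (z :: 'b::comm_ring_1) = (\<Sum>x<period. of_int (weight (int x)) * z ^ x)"
  by (simp add: weight_poly_def map_poly_of_int_sum map_poly_monom poly_sum poly_monom)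

lemma gen_fun_times_one_minus_power_period:
  assumes "z \<notin> poles"
  shows "gen_fun z * (1 - z ^ period) = poly (map_poly of_int weight_poly) z"
proof -
  have geometric: "z ^ a s / (1 - z ^ n s) * (1 - z ^ period)
      = (\<Sum>x<period. if x mod n s = a s then z ^ x else 0)" if "s \<in> K" for s
  proof -
    have "n s * (period div n s) = period"
      using n_dvd_period[OF that] by simp
    moreover have "z ^ n s \<noteq> 1"
      using assms that by (auto simp: poles_def)
    ultimately show ?thesis
      using residue_class_geometric_sum[OF a_less[OF that], of z "period div n s"] by simp
  qed
  have "gen_fun z * (1 - z ^ period)
      = (\<Sum>s\<in>K. of_int (lam s) * (\<Sum>x<period. if x mod n s = a s then z ^ x else 0))"
    unfolding gen_fun_def sum_distrib_right
  proof (intro sum.cong refl)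
    fix s assume "s \<in> K"
    have "of_int (lam s) * z ^ a s / (1 - z ^ n s) * (1 - z ^ period)
        = of_int (lam s) * (z ^ a s / (1 - z ^ n s) * (1 - z ^ period))"
      by simp
    also have "\<dots> = of_int (lam s) * (\<Sum>x<period. if x mod n s = a s then z ^ x else 0)"
      by (simp only: geometric[OF \<open>s \<in> K\<close>])
    finally show "of_int (lam s) * z ^ a s / (1 - z ^ n s) * (1 - z ^ period)
        = of_int (lam s) * (\<Sum>x<period. if x mod n s = a s then z ^ x else 0)" .
  qed
  also have "\<dots> = (\<Sum>x<period. \<Sum>s\<in>K. if x mod n s = a s then of_int (lam s) * z ^ x else 0)"
    unfolding sum_distrib_left by (subst sum.swap) (intro sum.cong refl, simp)
  also have "\<dots> = (\<Sum>x<period. of_int (weight (int x)) * z ^ x)"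
    unfolding weight_of_nat of_int_sum sum_distrib_right by (intro sum.cong refl) auto
  also have "\<dots> = poly (map_poly of_int weight_poly) z"
    by (simp add: poly_weight_poly)
  finally show ?thesis .
qed

lemma finite_poles: "finite poles"
proof -
  have "poles = (\<Union>s\<in>K. {w. w ^ n s = 1})"
    by (auto simp: poles_def)
  then show ?thesis
    using finite_K n_pos by (auto intro!: finite_roots_unity simp: Suc_le_eq)
qed

lemma n_le_card_poles:
  assumes "s \<in> K"
  shows "n s \<le> card poles"
proof -
  have "card {w :: complex. w ^ n s = 1} \<le> card poles"
    using assms by (intro card_mono finite_poles) (auto simp: poles_def)
  then show ?thesis
    using n_pos[OF assms] by (simp add: card_roots_unity_eq)
qed

(* gen_fun times the common denominator prod_{w : poles} (z - w), which is a polynomial because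
   1 - z ^ n = - prod_{w ^ n = 1} (z - w). *)
definition numerator_poly :: "complex poly" where
  "numerator_poly = (\<Sum>s\<in>K. smult (- of_int (lam s))
      (monom 1 (a s) * (\<Prod>w \<in> poles - {w. w ^ n s = 1}. [:- w, 1:])))"

lemma gen_fun_times_prod_poles:
  assumes "z \<notin> poles"
  shows "gen_fun z * (\<Prod>w\<in>poles. z - w) = poly numerator_poly z"
proof -
  have cancel_pole: "z ^ a s / (1 - z ^ n s) * (\<Prod>w\<in>poles. z - w)
      = - (z ^ a s * (\<Prod>w \<in> poles - {w. w ^ n s = 1}. z - w))" if "s \<in> K" for s
  proof -
    let ?U = "{w :: complex. w ^ n s = 1}"
    have "?U \<subseteq> poles"
      using that by (auto simp: poles_def)
    then have "(\<Prod>w\<in>poles. z - w) = (\<Prod>w \<in> poles - ?U. z - w) * (\<Prod>w\<in>?U. z - w)"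
      using finite_poles by (rule prod.subset_diff)
    also have "(\<Prod>w\<in>?U. z - w) = z ^ n s - 1"
      by (rule prod_minus_roots_of_unity[OF n_pos[OF that]])
    finally have prod_poles: "(\<Prod>w\<in>poles. z - w) = (z ^ n s - 1) * (\<Prod>w \<in> poles - ?U. z - w)"
      by (simp only: mult.commute)
    have "1 - z ^ n s \<noteq> 0"
      using assms that by (auto simp: poles_def)
    then have "z ^ a s / (1 - z ^ n s) * (z ^ n s - 1) = - (z ^ a s)"
      by (simp add: field_simps)
    then show ?thesis
      unfolding prod_poles mult.assoc[symmetric] by simp
  qed
  show ?thesis
    unfolding gen_fun_def numerator_poly_def sum_distrib_right poly_sum
  proof (intro sum.cong refl)
    fix s assume "s \<in> K"
    have "of_int (lam s) * z ^ a s / (1 - z ^ n s) * (\<Prod>w\<in>poles. z - w)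
        = of_int (lam s) * (z ^ a s / (1 - z ^ n s) * (\<Prod>w\<in>poles. z - w))"
      by simp
    also have "\<dots> = - of_int (lam s) * (z ^ a s * (\<Prod>w \<in> poles - {w. w ^ n s = 1}. z - w))"
      by (simp only: cancel_pole[OF \<open>s \<in> K\<close>] mult_minus_left mult_minus_right)
    also have "\<dots> = poly (smult (- of_int (lam s))
        (monom 1 (a s) * (\<Prod>w \<in> poles - {w. w ^ n s = 1}. [:- w, 1:]))) z"
      by (simp add: poly_prod poly_monom)
    finally show "of_int (lam s) * z ^ a s / (1 - z ^ n s) * (\<Prod>w\<in>poles. z - w)
        = poly (smult (- of_int (lam s))
          (monom 1 (a s) * (\<Prod>w \<in> poles - {w. w ^ n s = 1}. [:- w, 1:]))) z" .
  qed
qed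

lemma degree_numerator_poly:
  assumes "K \<noteq> {}"
  shows "degree numerator_poly < card poles"
proof -
  obtain s0 where "s0 \<in> K"
    using assms by blast
  then have "0 < card poles"
    using n_le_card_poles[of s0] n_pos[of s0] by linarith
  have "degree (smult (- of_int (lam s)) (monom 1 (a s) * (\<Prod>w \<in> poles - {w. w ^ n s = 1}. [:- w, 1:])))
      \<le> card poles - 1" if "s \<in> K" for s
  proof -
    let ?U = "{w :: complex. w ^ n s = 1}"
    have "card ?U = n s"
      using n_pos[OF that] by (rule card_roots_unity_eq)
    moreover have "?U \<subseteq> poles"
      using that by (auto simp: poles_def)
    ultimately have "card (poles - ?U) = card poles - n s"
      using n_pos[OF that] by (subst card_Diff_subset) (auto intro: card_ge_0_finite)
    then have "degree (\<Prod>w \<in> poles - ?U. [:- w, 1:]) = card poles - n s"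
      by (simp add: degree_prod_eq_sum_degree)
    then have "degree (monom 1 (a s) * (\<Prod>w \<in> poles - ?U. [:- w, 1:])) \<le> a s + (card poles - n s)"
      using degree_mult_le[of "monom 1 (a s)" "\<Prod>w \<in> poles - ?U. [:- w, 1:]"]
      by (simp add: degree_monom_eq)
    also have "\<dots> \<le> card poles - 1"
      using a_less[OF that] n_le_card_poles[OF that] by linarith
    finally show ?thesis
      using degree_smult_le le_trans by blast
  qed
  then have "degree numerator_poly \<le> card poles - 1"
    unfolding numerator_poly_def using finite_K by (intro degree_sum_le) auto
  then show ?thesis
    using \<open>0 < card poles\<close> by linarith
qed

lemma gen_fun_vanishes_off_poles:
  assumes "finite A" "A \<inter> poles = {}" "card poles \<le> card A" "\<forall>z\<in>A. gen_fun z = 0"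
    and "z \<notin> poles"
  shows "gen_fun z = 0"
proof (cases "K = {}")
  case True
  then show ?thesis
    unfolding gen_fun_def by simp
next
  case False
  have "numerator_poly = 0"
  proof (rule ccontr)
    assume "numerator_poly \<noteq> 0"
    have "A \<subseteq> {z. poly numerator_poly z = 0}"
    proof
      fix y assume "y \<in> A"
      then have "y \<notin> poles" and "gen_fun y = 0"
        using assms(2,4) by auto
      then show "y \<in> {z. poly numerator_poly z = 0}"
        using gen_fun_times_prod_poles[of y] by simp
    qed
    then have "card A \<le> card {z. poly numerator_poly z = 0}"
      using \<open>numerator_poly \<noteq> 0\<close> by (intro card_mono poly_roots_finite)
    also have "\<dots> \<le> degree numerator_poly"
      using \<open>numerator_poly \<noteq> 0\<close> by (rule card_poly_roots_bound)
    finally have "card A \<le> degree numerator_poly" .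
    then show False
      using degree_numerator_poly[OF False] assms(3) by linarith
  qed
  moreover have "(\<Prod>w\<in>poles. z - w) \<noteq> 0"
    using assms(5) finite_poles by auto
  ultimately show ?thesis
    using gen_fun_times_prod_poles[OF assms(5)] by simp
qed

lemma weight_eq_0_if_gen_fun_vanishes:
  assumes "\<And>z. z \<notin> poles \<Longrightarrow> gen_fun z = 0"
  shows "weight x = 0"
proof -
  have "complex_of_real u \<notin> poles" if "u \<in> {0<..<1}" for u
  proof -
    have "u ^ n s \<noteq> 1" if "s \<in> K" for s
      using \<open>u \<in> {0<..<1}\<close> n_pos[OF that] by (simp add: power_less_one_iff less_imp_neq)
    then show ?thesis
      by (auto simp: poles_def simp flip: of_real_power)
  qed
  then have "complex_of_real ` {0<..<1} \<subseteq> {z. poly (map_poly of_int weight_poly) z = 0}"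
    using assms gen_fun_times_one_minus_power_period by fastforce
  moreover have "infinite (complex_of_real ` {0<..<1})"
    by (simp add: finite_image_iff inj_on_def)
  ultimately have "map_poly (of_int :: int \<Rightarrow> complex) weight_poly = 0"
    using poly_roots_finite finite_subset by blast
  then have "weight_poly = 0"
    by (simp add: map_poly_eq_0_iff)
  then show ?thesis
    by (simp add: weight_poly_eq_0_iff)
qed

lemma card_poles_le: "card poles \<le> card {of_nat r / of_nat (n s) :: rat | r s. s \<in> K \<and> r < n s}"
proof -
  let ?S = "{of_nat r / of_nat (n s) :: rat | r s. s \<in> K \<and> r < n s}"
  have "?S = (\<lambda>(s, r). of_nat r / of_nat (n s)) ` (SIGMA s:K. {..<n s})"
    by auto
  then have "finite ?S"
    using finite_K by simp
  have "poles \<subseteq> (\<lambda>q. cis (2 * pi * of_rat q)) ` ?S"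
  proof
    fix w assume "w \<in> poles"
    then obtain s where s: "s \<in> K" "w ^ n s = 1"
      by (auto simp: poles_def)
    then obtain r where "r < n s" "w = cis (2 * pi * real r / real (n s))"
      using bij_betw_roots_unity[OF n_pos[OF s(1)]] by (auto simp: bij_betw_def)
    moreover have "of_rat (of_nat r / of_nat (n s)) = real r / real (n s)"
      by (simp add: of_rat_divide)
    ultimately show "w \<in> (\<lambda>q. cis (2 * pi * of_rat q)) ` ?S"
      using s(1) by (intro image_eqI[of _ _ "of_nat r / of_nat (n s)"]) auto
  qed
  then have "card poles \<le> card ((\<lambda>q. cis (2 * pi * of_rat q)) ` ?S)"
    using \<open>finite ?S\<close> by (intro card_mono) auto
  also have "\<dots> \<le> card ?S"
    by (rule card_image_le[OF \<open>finite ?S\<close>])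
  finally show ?thesis .
qed

lemma primitive_root_power_notin_poles:
  assumes p: "prime p" and card: "card poles < p" and \<zeta>: "primitive_root_of_unity p \<zeta>"
    and t: "\<not> p dvd t"
  shows "\<zeta> ^ t \<notin> poles" and "(\<zeta> ^ t) ^ period \<noteq> 1"
proof -
  have not_dvd_n: "\<not> p dvd n s" if "s \<in> K" for s
    using n_pos[OF that] n_le_card_poles[OF that] card by (auto dest: dvd_imp_le)
  have power_ne_1: "(\<zeta> ^ t) ^ m \<noteq> 1" if "\<not> p dvd m" for m
    using that p t by (simp add: primitive_root_of_unity_power_eq_1_iff[OF \<zeta>] prime_dvd_mult_iff
        flip: power_mult)
  show "\<zeta> ^ t \<notin> poles"
    using power_ne_1 not_dvd_n by (auto simp: poles_def)
  show "(\<zeta> ^ t) ^ period \<noteq> 1"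
    using power_ne_1 not_dvd_n p finite_K by (simp add: period_def prime_dvd_prod_iff)
qed

lemma gen_fun_primitive_root_power_eq_0_iff:
  assumes p: "prime p" and card: "card poles < p" and \<zeta>: "primitive_root_of_unity p \<zeta>"
    and t: "\<not> p dvd t"
  shows "gen_fun (\<zeta> ^ t) = 0 \<longleftrightarrow> poly (map_poly of_int weight_poly) (\<zeta> ^ t) = 0"
  using gen_fun_times_one_minus_power_period[OF primitive_root_power_notin_poles(1)[OF assms]]
    primitive_root_power_notin_poles(2)[OF assms] by auto

lemma gen_fun_eq_0_at_primitive_root_powers:
  assumes p: "prime p" and card: "card poles < p" and \<zeta>: "primitive_root_of_unity p \<zeta>"
    and root: "gen_fun \<zeta> = 0" and t: "\<not> p dvd t"
  shows "gen_fun (\<zeta> ^ t) = 0"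
proof -
  have "\<not> p dvd 1"
    using p by auto
  then have "poly (map_poly of_int weight_poly) \<zeta> = 0"
    using gen_fun_primitive_root_power_eq_0_iff[OF p card \<zeta>, of 1] root by simp
  moreover have "\<zeta> ^ p = 1" "\<zeta> \<noteq> 1" "(\<zeta> ^ t) ^ p = 1" "\<zeta> ^ t \<noteq> 1"
    using \<open>\<not> p dvd 1\<close> t primitive_root_of_unity_power_eq_1_iff[OF \<zeta>, of 1]
    by (simp_all add: primitive_root_of_unity_power_eq_1_iff[OF \<zeta>] flip: power_mult)
  ultimately have "poly (map_poly of_int weight_poly) (\<zeta> ^ t) = 0"
    using int_poly_root_of_unity_conjugate[OF p] by blast
  then show ?thesis
    using gen_fun_primitive_root_power_eq_0_iff[OF p card \<zeta> t] by simp
qed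

theorem weight_eq_0_iff_gen_fun_root:
  assumes p: "prime p" and card: "card poles < p" and \<zeta>: "primitive_root_of_unity p \<zeta>"
  shows "(\<forall>x. weight x = 0) \<longleftrightarrow> gen_fun \<zeta> = 0"
proof
  assume "\<forall>x. weight x = 0"
  then have "weight_poly = 0"
    by (simp add: weight_poly_eq_0_iff)
  moreover have "\<not> p dvd 1"
    using p by auto
  ultimately show "gen_fun \<zeta> = 0"
    using gen_fun_primitive_root_power_eq_0_iff[OF p card \<zeta>, of 1] by simp
next
  assume "gen_fun \<zeta> = 0"
  define A where "A = (\<lambda>t. \<zeta> ^ t) ` {1..<p}"
  have not_dvd: "\<not> p dvd t" if "t \<in> {1..<p}" for t
    using that by (auto dest: dvd_imp_le)
  have "card A = p - 1"
    unfolding A_def using inj_on_primitive_root_powers[OF \<zeta>]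
    by (subst card_image) (auto intro: inj_on_subset)
  moreover have "A \<inter> poles = {}"
    using primitive_root_power_notin_poles(1)[OF p card \<zeta> not_dvd] by (auto simp: A_def)
  moreover have "\<forall>z\<in>A. gen_fun z = 0"
    using gen_fun_eq_0_at_primitive_root_powers[OF p card \<zeta> \<open>gen_fun \<zeta> = 0\<close> not_dvd]
    by (auto simp: A_def)
  ultimately have "gen_fun z = 0" if "z \<notin> poles" for z
    using gen_fun_vanishes_off_poles[of A z] that card by (simp add: A_def)
  then show "\<forall>x. weight x = 0"
    using weight_eq_0_if_gen_fun_vanishes by blast
qed

end

theorem theorem1p2:
  fixes k :: nat and lam :: "nat \<Rightarrow> int" and n :: "nat \<Rightarrow> nat" and a :: "nat \<Rightarrow> int"
    and p :: nat and \<zeta> :: complex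
  assumes n_pos: "\<forall>s\<in>{1..k}. 0 < n s"
    and a_range: "\<forall>s\<in>{1..k}. 0 \<le> a s \<and> a s < int (n s)"
    and p_prime: "prime p"
    and p_gt: "p > card (S_set k n)"
    and zeta: "primitive_root_of_unity p \<zeta>"
  shows "(\<forall>x::int. (\<Sum>s\<in>{s\<in>{1..k}. [x = a s] (mod int (n s))}. lam s) = 0)
     \<longleftrightarrow> (\<Sum>s=1..k. of_int (lam s) * \<zeta> ^ nat (a s) / (1 - \<zeta> ^ n s)) = 0"
proof -
  interpret residue_classes "{1..k}" lam n "\<lambda>s. nat (a s)"
    using n_pos a_range by unfold_locales (auto simp: nat_less_iff)
  have "card poles < p"
    using card_poles_le p_gt by (simp add: S_set_def)
  moreover have "(\<Sum>s\<in>{s\<in>{1..k}. [x = a s] (mod int (n s))}. lam s) = weight x" for x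
    unfolding weight_def using a_range by (intro sum.cong) auto
  moreover have "(\<Sum>s=1..k. of_int (lam s) * \<zeta> ^ nat (a s) / (1 - \<zeta> ^ n s)) = gen_fun \<zeta>"
    unfolding gen_fun_def by (rule refl)
  ultimately show ?thesis
    using weight_eq_0_iff_gen_fun_root[OF p_prime _ zeta] by simp
qed

end
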